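(* Let $\{(F_j,d_j)\}_{j\ge 1}$ be a countable collection of metric spaces with labelled presentations $\mathcal F^j$ (common alphabet $\{1,\dots,m\}$, $m\ge2$) as in the context. If $\mathcal F=\bigcup_{j\ge1}\mathcal F^j$ is a strong modular chaotic structure for $F=\bigcup_{j\ge1}F_j$, then the map $\varPhi$ is modular chaotic in the Li-Yorke sense.
   Context: Setting. Let $(F_j,d_j)$, $j=1,2,\ldots$, be metric spaces and $m\ge2$ a natural number. For each $j$ there is a presentation $\mathcal F^j=\{\mathcal F^j_{i_1i_2\ldots}: i_k\in\{1,\dots,m\}\}$: every infinite sequence over $\{1,\dots,m\}$ labels an element of $F_j$ and every element of $F_j$ has at least one label (not necessarily unique). Put $\delta_j(\mathcal F^j_{i_1i_2\ldots},\mathcal F^j_{j_1j_2\ldots})=d_j(f_1,f_2)$ when the labels correspond to $f_1,f_2\in F_j$; write $\delta$ for $\delta_j$ on $\mathcal F^j$. For fixed $i_1,\dots,i_n$, $\mathcal F^j_{i_1\ldots i_n}=\bigcup_{j_k}\mathcal F^j_{i_1\ldots i_nj_1j_2\ldots}$; $\mathrm{diam}(A)=\sup\{\delta_j(x,y):x,y\in A\}$, $\delta_j(A,B)=\inf\{\delta_j(x,y):x\in A,y\in B\}$. $\mathcal F$ is a strong modular chaotic structure for $F$ if $\sup_j\max_{i_1\ldots i_n}\mathrm{diam}(\mathcal F^j_{i_1\ldots i_n})\to0$ as $n\to\infty$ (strong diameter condition), and for every $j$ there are $\varepsilon_0^j>0$ and a natural $n=n(j)$ such that for any $i_1\ldots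 i_n$ there exist $j_1\ldots j_n$ with $\delta_j(\mathcal F^j_{i_1\ldots i_n},\mathcal F^j_{j_1\ldots j_n})\ge\varepsilon_0^j$, with $\inf_j\varepsilon_0^j>0$. The modular similarity map: $\varphi(\mathcal F^j_{i_1i_2i_3\ldots})=\mathcal F^{j+1}_{i_2i_3\ldots}$. The multivalued map $\varPhi:F\to F$ sends $f\in F_j$ to the points of $F_{j+1}$ labelled by $\varphi(\mathcal F^j_{i_1i_2\ldots})$ for all labels of $f$; $\varPhi$ is modular chaotic in the Li-Yorke sense if $\varphi$ is. A point $\mathcal F^j_{i_1i_2\ldots}$ is (modular-)periodic with period $p$ if its lower index is an endless repetition of a block of $p$ terms. Modular Li-Yorke chaos of $\varphi$: in addition to the modular-periodic points, for each $j=1,2,\ldots$ there is an uncountable scrambled set of non-periodic points in $\mathcal F^j$ such that for each couple $x,y$ in the set with $\delta(x,y)\ne0$: $\limsup_{k\to\infty}\delta(\varphi^k(x),\varphi^k(y))>0$ and $\liminf_{k\to\infty}\delta(\varphi^k(x),\varphi^k(y))=0$; and for each point $x$ of the set and each periodic point $y$ of $\mathcal F^j$: $\limsup_{k\to\infty}\delta(\varphi^k(x),\varphi^k(y))>0$. *)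

theory Defs
  imports "HOL-Analysis.Analysis"
begin

definition seqs :: "nat \<Rightarrow> (nat \<Rightarrow> nat) set" where
  "seqs m = {s. \<forall>k. s k \<in> {1..m}}"

definition metric_on :: "'a set \<Rightarrow> ('a \<Rightarrow> 'a \<Rightarrow> real) \<Rightarrow> bool" where
  "metric_on A d \<longleftrightarrow> (\<forall>x\<in>A. \<forall>y\<in>A. 0 \<le> d x y \<and> (d x y = 0 \<longleftrightarrow> x = y) \<and> d x y = d y x
       \<and> (\<forall>z\<in>A. d x z \<le> d x y + d y z))"

definition presentation :: "nat \<Rightarrow> 'a set \<Rightarrow> ((nat \<Rightarrow> nat) \<Rightarrow> 'a) \<Rightarrow> bool" where
  "presentation m A lab \<longleftrightarrow> lab ` seqs m = A"

definition delta :: "(nat \<Rightarrow> (nat \<Rightarrow> nat) \<Rightarrow> 'a) \<Rightarrow> (nat \<Rightarrow> 'a \<Rightarrow> 'a \<Rightarrow> real)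
     \<Rightarrow> nat \<times> (nat \<Rightarrow> nat) \<Rightarrow> nat \<times> (nat \<Rightarrow> nat) \<Rightarrow> real" where
  "delta lab d x y = d (fst x) (lab (fst x) (snd x)) (lab (fst y) (snd y))"

definition modsim :: "nat \<times> (nat \<Rightarrow> nat) \<Rightarrow> nat \<times> (nat \<Rightarrow> nat)" where
  "modsim x = (Suc (fst x), (\<lambda>i. snd x (Suc i)))"

definition periodic_label :: "nat \<Rightarrow> (nat \<Rightarrow> nat) \<Rightarrow> bool" where
  "periodic_label p s \<longleftrightarrow> p \<ge> 1 \<and> (\<forall>k. s (k + p) = s k)"

definition strong_modular_chaotic_structure ::
  "nat \<Rightarrow> (nat \<Rightarrow> 'a \<Rightarrow> 'a \<Rightarrow> real) \<Rightarrow> (nat \<Rightarrow> (nat \<Rightarrow> nat) \<Rightarrow> 'a) \<Rightarrow> bool" where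
  "strong_modular_chaotic_structure m d lab \<longleftrightarrow>
     \<comment> \<open>strong diameter condition: sup_j max_{i1..in} diam(F^j_{i1..in}) \<rightarrow> 0\<close>
     (\<forall>\<epsilon>>0. \<exists>N. \<forall>n\<ge>N. \<forall>j\<ge>1. \<forall>s\<in>seqs m. \<forall>t\<in>seqs m.
         (\<forall>k<n. s k = t k) \<longrightarrow> delta lab d (j, s) (j, t) \<le> \<epsilon>)
   \<and> \<comment> \<open>separation condition with inf_j eps0_j > 0\<close>
     (\<exists>eps0 :: nat \<Rightarrow> real. \<exists>nn :: nat \<Rightarrow> nat.
        (\<forall>j\<ge>1. eps0 j > 0) \<and> (INF j\<in>{1..}. eps0 j) > 0 \<and>
        (\<forall>j\<ge>1. \<forall>u\<in>seqs m. \<exists>v\<in>seqs m. \<forall>s\<in>seqs m. \<forall>t\<in>seqs m.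
            (\<forall>k<nn j. s k = u k) \<longrightarrow> (\<forall>k<nn j. t k = v k) \<longrightarrow>
            delta lab d (j, s) (j, t) \<ge> eps0 j))"

definition modular_li_yorke_chaotic ::
  "nat \<Rightarrow> (nat \<Rightarrow> 'a \<Rightarrow> 'a \<Rightarrow> real) \<Rightarrow> (nat \<Rightarrow> (nat \<Rightarrow> nat) \<Rightarrow> 'a) \<Rightarrow> bool" where
  "modular_li_yorke_chaotic m d lab \<longleftrightarrow>
     (\<forall>j::nat\<ge>1. \<forall>p::nat\<ge>1. \<exists>s\<in>seqs m. periodic_label p s) \<and>
     (\<forall>j\<ge>1. \<exists>S \<subseteq> seqs m. \<not> countable S \<and>
        (\<forall>s\<in>S. \<forall>p. \<not> periodic_label p s) \<and>
        (\<forall>s\<in>S. \<forall>t\<in>S. delta lab d (j, s) (j, t) \<noteq> 0 \<longrightarrow>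
            limsup (\<lambda>k. ereal (delta lab d ((modsim ^^ k) (j, s)) ((modsim ^^ k) (j, t)))) > 0 \<and>
            liminf (\<lambda>k. ereal (delta lab d ((modsim ^^ k) (j, s)) ((modsim ^^ k) (j, t)))) = 0) \<and>
        (\<forall>s\<in>S. \<forall>t\<in>seqs m. (\<exists>p. periodic_label p t) \<longrightarrow>
            limsup (\<lambda>k. ereal (delta lab d ((modsim ^^ k) (j, s)) ((modsim ^^ k) (j, t)))) > 0))"

end

theory Submission
  imports Defs "HOL-Library.Omega_Words_Fun"
begin

(* The k-th iterate of the modular similarity map sends (j, s) to (j + k, suffix k s), so
  everything happens on label sequences, with the pseudometrics D_j pulled back from d_j.
  The two conditions of the structure give a length N and c > 0 such that every cylinder of
  length N, at every level, has a partner cylinder at distance at least c.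
  To each set A of naturals we attach a label that is 1 except on sparse blocks of length N.
  Some blocks record whether x \<in> A, by being 1...1 or its partner; the others are partners
  of the initial segments of the countably many periodic labels.  Labels of different sets
  are c apart after infinitely many shifts, at the blocks recording a point where the sets
  differ, yet also arbitrarily close, on the ever longer runs of 1s between blocks.  A
  periodic label is fixed by shifts through multiples of its period, so every constructed
  label is c away from it at the blocks reserved for it. *)

lemma frequently_ge_imp_Limsup_pos:
  fixes f :: "'a \<Rightarrow> real"
  assumes "0 < c" "\<exists>\<^sub>F x in F. c \<le> f x"
  shows "0 < Limsup F (\<lambda>x. ereal (f x))"
proof -
  have "ereal c \<le> Limsup F (\<lambda>x. ereal (f x))"
  proof (rule ccontr)
    assume "\<not> ereal c \<le> Limsup F (\<lambda>x. ereal (f x))"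
    then have "\<forall>\<^sub>F x in F. ereal (f x) < ereal c"
      by (intro Limsup_lessD) (simp add: not_le)
    then have "\<forall>\<^sub>F x in F. f x < c"
      by simp
    with assms(2) show False
      by (simp add: frequently_def not_le)
  qed
  moreover have "0 < ereal c"
    using assms(1) by simp
  ultimately show ?thesis
    by (rule order.strict_trans2[rotated])
qed

lemma frequently_le_imp_Liminf_eq_0:
  fixes f :: "'a \<Rightarrow> real"
  assumes "F \<noteq> bot" "\<forall>\<^sub>F x in F. 0 \<le> f x" "\<And>\<epsilon>. 0 < \<epsilon> \<Longrightarrow> \<exists>\<^sub>F x in F. f x \<le> \<epsilon>"
  shows "Liminf F (\<lambda>x. ereal (f x)) = 0"
proof (rule antisym)
  show "Liminf F (\<lambda>x. ereal (f x)) \<le> 0"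
  proof (rule ereal_le_epsilon2)
    fix \<epsilon> :: real assume "0 < \<epsilon>"
    show "Liminf F (\<lambda>x. ereal (f x)) \<le> 0 + ereal \<epsilon>"
    proof (rule ccontr)
      assume "\<not> Liminf F (\<lambda>x. ereal (f x)) \<le> 0 + ereal \<epsilon>"
      then have "\<forall>\<^sub>F x in F. ereal \<epsilon> < ereal (f x)"
        by (intro less_LiminfD) (simp add: not_le)
      then have "\<forall>\<^sub>F x in F. \<epsilon> < f x"
        by simp
      with assms(3)[OF \<open>0 < \<epsilon>\<close>] show False
        by (simp add: frequently_def not_le)
    qed
  qed
  show "0 \<le> Liminf F (\<lambda>x. ereal (f x))"
    using assms(2) by (intro Liminf_bounded) simp
qed

lemma frequently_sequentially_image:
  assumes "\<And>n. n \<le> f n" "\<exists>\<^sub>F n in sequentially. P (f n)"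
  shows "\<exists>\<^sub>F k in sequentially. P k"
  unfolding frequently_sequentially
proof
  fix K
  obtain n where "K \<le> n" "P (f n)"
    using assms(2) unfolding frequently_sequentially by blast
  then show "\<exists>k\<ge>K. P k"
    using assms(1)[of n] by (intro exI[of _ "f n"]) simp
qed

lemma frequently_even_sequentially: "\<exists>\<^sub>F n in sequentially. even (n :: nat)"
  unfolding frequently_sequentially
proof
  show "\<exists>n\<ge>K. even n" for K :: nat
    by (intro exI[of _ "2 * K"]) simp
qed

lemma frequently_odd_sequentially: "\<exists>\<^sub>F n in sequentially. odd (n :: nat)"
  unfolding frequently_sequentially
proof
  show "\<exists>n\<ge>K. odd n" for K :: nat
    by (intro exI[of _ "Suc (2 * K)"]) simp
qed

lemma frequently_prod_decode:
  assumes "\<exists>\<^sub>F y in sequentially. P y"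
  shows "\<exists>\<^sub>F n in sequentially. \<exists>y. prod_decode n = (x, y) \<and> P y"
  unfolding frequently_sequentially
proof
  fix K
  obtain y where "K \<le> y" "P y"
    using assms unfolding frequently_sequentially by blast
  then show "\<exists>n\<ge>K. \<exists>y. prod_decode n = (x, y) \<and> P y"
    using le_prod_encode_2[of y x] by (intro exI[of _ "prod_encode (x, y)"]) auto
qed

lemma uncountable_UNIV_nat_set: "uncountable (UNIV :: nat set set)"
  using Cantors_theorem[of "UNIV :: nat set"] by (auto simp: uncountable_def)

lemma modsim_power: "(modsim ^^ k) (j, s) = (j + k, suffix k s)"
  by (induction k) (simp_all add: modsim_def suffix_def)

lemma const_one_in_seqs: "1 \<le> m \<Longrightarrow> (\<lambda>_. 1) \<in> seqs m"
  by (simp add: seqs_def)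

lemma suffix_in_seqs: "s \<in> seqs m \<Longrightarrow> suffix k s \<in> seqs m"
  by (simp add: seqs_def)

lemma periodic_label_add_mult:
  assumes "periodic_label p t"
  shows "t (i + p * q) = t i"
proof (induction q)
  case (Suc q)
  have "t (i + p * Suc q) = t (i + p * q + p)"
    by (simp add: algebra_simps)
  also have "\<dots> = t (i + p * q)"
    using assms by (simp add: periodic_label_def)
  finally show ?case
    using Suc by simp
qed simp

lemma periodic_label_mod: "periodic_label p t \<Longrightarrow> t i = t (i mod p)"
  using periodic_label_add_mult[of p t "i mod p" "i div p"] by simp

lemma suffix_periodic_label: "periodic_label p t \<Longrightarrow> p dvd k \<Longrightarrow> suffix k t = t"
  by (auto simp: suffix_def periodic_label_add_mult add.commute elim!: dvdE)

lemma periodic_label_const: "1 \<le> p \<Longrightarrow> periodic_label p (\<lambda>_. a)"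
  by (simp add: periodic_label_def)

definition periodic_labels :: "nat \<Rightarrow> (nat \<Rightarrow> nat) set" where
  "periodic_labels m = {t \<in> seqs m. \<exists>p. periodic_label p t}"

lemma countable_periodic_labels: "countable (periodic_labels m)"
proof (rule countable_subset)
  show "periodic_labels m \<subseteq> range (\<lambda>(p, w) i. w ! (i mod p))"
  proof
    fix t assume "t \<in> periodic_labels m"
    then obtain p where p: "periodic_label p t"
      by (auto simp: periodic_labels_def)
    then have "t = (\<lambda>i. map t [0..<p] ! (i mod p))"
      by (auto simp: periodic_label_def intro!: periodic_label_mod)
    then show "t \<in> range (\<lambda>(p, w) i. w ! (i mod p))"
      by (intro range_eqI[of _ _ "(p, map t [0..<p])"]) simp
  qed
qed simp

lemma const_in_periodic_labels: "1 \<le> m \<Longrightarrow> (\<lambda>_. 1) \<in> periodic_labels m"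
  using const_one_in_seqs periodic_label_const[of 1] by (auto simp: periodic_labels_def)

(* (n + 1)! leaves room for n empty blocks after block n and is divisible by every p \<le> n. *)
definition block_pos :: "nat \<Rightarrow> nat" where
  "block_pos n = fact (Suc n)"

lemma block_pos_gap: "block_pos n + n < block_pos (Suc n)"
proof -
  have "1 \<le> block_pos n"
    unfolding block_pos_def by (rule fact_ge_1)
  then have "Suc n \<le> Suc n * block_pos n"
    by (metis mult.right_neutral mult_le_mono2)
  moreover have "block_pos (Suc n) = block_pos n + Suc n * block_pos n"
    unfolding block_pos_def by (simp only: fact_Suc[of "Suc n"] of_nat_id mult_Suc)
  ultimately show ?thesis
    by linarith
qed

lemma strict_mono_block_pos: "strict_mono block_pos"
  by (intro strict_monoI_Suc le_less_trans[OF le_add1 block_pos_gap])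

lemma le_block_pos: "n \<le> block_pos n"
  using fact_ge_self[of "Suc n"] by (simp add: block_pos_def)

lemma dvd_block_pos: "1 \<le> p \<Longrightarrow> p \<le> n \<Longrightarrow> p dvd block_pos n"
  by (simp add: block_pos_def dvd_fact)

definition sparse_blocks :: "nat \<Rightarrow> (nat \<Rightarrow> nat \<Rightarrow> nat) \<Rightarrow> nat \<Rightarrow> nat" where
  "sparse_blocks N B i =
     (if i div N \<in> range block_pos then B (inv block_pos (i div N)) (i mod N) else 1)"

lemma sparse_blocks_in_seqs:
  assumes "1 \<le> m" "\<And>n. B n \<in> seqs m"
  shows "sparse_blocks N B \<in> seqs m"
  using assms unfolding seqs_def sparse_blocks_def by simp

lemma suffix_sparse_blocks_block:
  assumes "i < N"
  shows "suffix (block_pos n * N) (sparse_blocks N B) i = B n i"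
proof -
  have "(block_pos n * N + i) div N = block_pos n" "(block_pos n * N + i) mod N = i"
    using assms by auto
  then show ?thesis
    using strict_mono_on_imp_inj_on[OF strict_mono_block_pos]
    by (simp add: sparse_blocks_def)
qed

lemma suffix_sparse_blocks_gap:
  assumes "0 < N" "i < n"
  shows "suffix (Suc (block_pos n) * N) (sparse_blocks N B) i = 1"
proof -
  define b where "b = Suc (block_pos n) + i div N"
  have div: "(Suc (block_pos n) * N + i) div N = b"
    unfolding b_def using assms(1) by (intro div_mult_self3) simp
  have "i div N < n"
    using div_le_dividend[of i N] assms(2) by linarith
  then have "block_pos n < b" "b < block_pos (Suc n)"
    using block_pos_gap[of n] by (simp_all add: b_def)
  then have "b \<notin> range block_pos"
    using strict_mono_less[OF strict_mono_block_pos] by (metis not_less_eq rangeE)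
  then show ?thesis
    unfolding suffix_nth sparse_blocks_def div by (rule if_not_P)
qed

(* D l is d_l pulled back to the labels of level l.  Of the separation condition only
  separated_points is kept: with small_cylinders it already separates whole cylinders
  (cylinder_partner_exists). *)
locale label_pseudometrics =
  fixes m :: nat
    and D :: "nat \<Rightarrow> (nat \<Rightarrow> nat) \<Rightarrow> (nat \<Rightarrow> nat) \<Rightarrow> real"
  assumes one_le_m: "1 \<le> m"
    and dist_self: "1 \<le> l \<Longrightarrow> s \<in> seqs m \<Longrightarrow> D l s s = 0"
    and dist_commute: "1 \<le> l \<Longrightarrow> s \<in> seqs m \<Longrightarrow> t \<in> seqs m \<Longrightarrow> D l s t = D l t s"
    and dist_triangle:
      "1 \<le> l \<Longrightarrow> s \<in> seqs m \<Longrightarrow> t \<in> seqs m \<Longrightarrow> u \<in> seqs m \<Longrightarrow> D l s u \<le> D l s t + D l t u"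
    and small_cylinders: "0 < \<epsilon> \<Longrightarrow>
      \<exists>N. \<forall>l\<ge>1. \<forall>s\<in>seqs m. \<forall>t\<in>seqs m. (\<forall>i<N. s i = t i) \<longrightarrow> D l s t \<le> \<epsilon>"
    and separated_points: "\<exists>c>0. \<forall>l\<ge>1. \<forall>u\<in>seqs m. \<exists>v\<in>seqs m. c \<le> D l u v"
begin

lemma dist_nonneg: "1 \<le> l \<Longrightarrow> s \<in> seqs m \<Longrightarrow> t \<in> seqs m \<Longrightarrow> 0 \<le> D l s t"
  using dist_triangle[of l s t s] dist_self[of l s] dist_commute[of l s t] by simp

lemma dist_lower_bound:
  assumes "1 \<le> l" "s \<in> seqs m" "t \<in> seqs m" "u \<in> seqs m" "v \<in> seqs m"
  shows "D l u v - D l s u - D l t v \<le> D l s t"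
  using dist_triangle[OF assms(1,4,2,5)] dist_triangle[OF assms(1,2,3,5)] dist_commute[OF assms(1,4,2)]
  by linarith

(* By modsim_power, the distance between the k-th images of (j, s) and (j, t). *)
definition orbit_dist :: "nat \<Rightarrow> (nat \<Rightarrow> nat) \<Rightarrow> (nat \<Rightarrow> nat) \<Rightarrow> nat \<Rightarrow> real" where
  "orbit_dist j s t k = D (j + k) (suffix k s) (suffix k t)"

lemma orbit_dist_nonneg: "1 \<le> j \<Longrightarrow> s \<in> seqs m \<Longrightarrow> t \<in> seqs m \<Longrightarrow> 0 \<le> orbit_dist j s t k"
  by (simp add: orbit_dist_def dist_nonneg suffix_in_seqs)

lemma orbit_dist_self: "1 \<le> j \<Longrightarrow> s \<in> seqs m \<Longrightarrow> orbit_dist j s s k = 0"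
  by (simp add: orbit_dist_def dist_self suffix_in_seqs)

end

locale cylinder_partner = label_pseudometrics +
  fixes c :: real
    and N :: nat
    and partner :: "nat \<Rightarrow> (nat \<Rightarrow> nat) \<Rightarrow> nat \<Rightarrow> nat"
  assumes c_pos: "0 < c"
    and N_pos: "0 < N"
    and partner_in_seqs: "1 \<le> l \<Longrightarrow> u \<in> seqs m \<Longrightarrow> partner l u \<in> seqs m"
    and partner_separated: "1 \<le> l \<Longrightarrow> u \<in> seqs m \<Longrightarrow> s \<in> seqs m \<Longrightarrow> t \<in> seqs m \<Longrightarrow>
      \<forall>i<N. s i = u i \<Longrightarrow> \<forall>i<N. t i = partner l u i \<Longrightarrow> c \<le> D l s t"

lemma (in label_pseudometrics) cylinder_partner_exists:
  "\<exists>c N partner. cylinder_partner m D c N partner"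
proof -
  obtain c where c: "0 < c" and sep: "\<forall>l\<ge>1. \<forall>u\<in>seqs m. \<exists>v\<in>seqs m. c \<le> D l u v"
    using separated_points by blast
  have c4: "0 < c / 4"
    using c by simp
  obtain N where N: "\<forall>l\<ge>1. \<forall>s\<in>seqs m. \<forall>t\<in>seqs m. (\<forall>i<N. s i = t i) \<longrightarrow> D l s t \<le> c / 4"
    using small_cylinders[OF c4] by blast
  define partner where "partner l u = (SOME v. v \<in> seqs m \<and> c \<le> D l u v)" for l u
  have partner: "partner l u \<in> seqs m \<and> c \<le> D l u (partner l u)" if "1 \<le> l" "u \<in> seqs m" for l u
  proof -
    have "\<exists>v. v \<in> seqs m \<and> c \<le> D l u v"
      using sep that by blast
    then show ?thesis
      unfolding partner_def by (rule someI_ex)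
  qed
  have "cylinder_partner m D (c / 2) (Suc N) partner"
  proof (intro cylinder_partner.intro cylinder_partner_axioms.intro label_pseudometrics_axioms)
    show "0 < c / 2"
      using c by simp
    show "0 < Suc N"
      by simp
    show "partner l u \<in> seqs m" if "1 \<le> l" "u \<in> seqs m" for l u
      using partner[OF that] by simp
    fix l u s t
    assume l: "1 \<le> l" and u: "u \<in> seqs m" and s: "s \<in> seqs m" and t: "t \<in> seqs m"
      and su: "\<forall>i<Suc N. s i = u i" and tv: "\<forall>i<Suc N. t i = partner l u i"
    have v: "partner l u \<in> seqs m" "c \<le> D l u (partner l u)"
      using partner[OF l u] by auto
    have "D l s u \<le> c / 4"
      using su by (intro N[rule_format, OF l s u]) simp
    moreover have "D l t (partner l u) \<le> c / 4"
      using tv by (intro N[rule_format, OF l t v(1)]) simp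
    ultimately show "c / 2 \<le> D l s t"
      using v(2) dist_lower_bound[OF l s t u v(1)] by linarith
  qed
  then show ?thesis
    by blast
qed

context cylinder_partner
begin

lemma partner_separated_sym:
  assumes "1 \<le> l" "u \<in> seqs m" "s \<in> seqs m" "t \<in> seqs m"
    and "(\<forall>i<N. s i = u i \<and> t i = partner l u i) \<or> (\<forall>i<N. t i = u i \<and> s i = partner l u i)"
  shows "c \<le> D l s t"
  using assms(5)
proof
  assume "\<forall>i<N. s i = u i \<and> t i = partner l u i"
  then show ?thesis
    using partner_separated[OF assms(1-4)] by simp
next
  assume "\<forall>i<N. t i = u i \<and> s i = partner l u i"
  then have "c \<le> D l t s"
    using partner_separated[OF assms(1,2,4,3)] by simp
  then show ?thesis
    using dist_commute[OF assms(1,3,4)] by simp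
qed

(* For n = prod_encode (x, y), an even y makes block n record whether x \<in> A, an odd y makes it
  keep away from the x-th periodic label. *)
definition scrambled_block :: "nat \<Rightarrow> nat set \<Rightarrow> nat \<Rightarrow> nat \<Rightarrow> nat" where
  "scrambled_block j A n =
     (case prod_decode n of (x, y) \<Rightarrow>
       if even y then (if x \<in> A then partner (j + block_pos n * N) (\<lambda>_. 1) else (\<lambda>_. 1))
       else partner (j + block_pos n * N) (from_nat_into (periodic_labels m) x))"

definition scrambled_label :: "nat \<Rightarrow> nat set \<Rightarrow> nat \<Rightarrow> nat" where
  "scrambled_label j A = sparse_blocks N (scrambled_block j A)"

lemma scrambled_block_even:
  "prod_decode n = (x, y) \<Longrightarrow> even y \<Longrightarrow>
    scrambled_block j A n = (if x \<in> A then partner (j + block_pos n * N) (\<lambda>_. 1) else (\<lambda>_. 1))"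
  by (simp add: scrambled_block_def)

lemma scrambled_block_odd:
  "prod_decode n = (x, y) \<Longrightarrow> odd y \<Longrightarrow>
    scrambled_block j A n = partner (j + block_pos n * N) (from_nat_into (periodic_labels m) x)"
  by (simp add: scrambled_block_def)

lemma scrambled_block_in_seqs:
  assumes "1 \<le> j"
  shows "scrambled_block j A n \<in> seqs m"
proof -
  have l: "1 \<le> j + block_pos n * N"
    using assms by simp
  have const: "(\<lambda>_. 1) \<in> seqs m"
    using one_le_m by (rule const_one_in_seqs)
  have periodic: "from_nat_into (periodic_labels m) x \<in> seqs m" for x
    using from_nat_into[of "periodic_labels m" x] const_in_periodic_labels[OF one_le_m]
    by (auto simp: periodic_labels_def)
  obtain x y where xy: "prod_decode n = (x, y)"
    by (cases "prod_decode n")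
  show ?thesis
  proof (cases "even y")
    case True
    then show ?thesis
      using partner_in_seqs[OF l const] const by (simp add: scrambled_block_even[OF xy])
  next
    case False
    then show ?thesis
      using partner_in_seqs[OF l periodic] by (simp add: scrambled_block_odd[OF xy])
  qed
qed

lemma scrambled_label_in_seqs: "1 \<le> j \<Longrightarrow> scrambled_label j A \<in> seqs m"
  unfolding scrambled_label_def using one_le_m scrambled_block_in_seqs
  by (rule sparse_blocks_in_seqs)

lemma scrambled_label_block:
  "i < N \<Longrightarrow> suffix (block_pos n * N) (scrambled_label j A) i = scrambled_block j A n i"
  unfolding scrambled_label_def by (rule suffix_sparse_blocks_block)

lemma scrambled_label_gap:
  "i < n \<Longrightarrow> suffix (Suc (block_pos n) * N) (scrambled_label j A) i = 1"
  unfolding scrambled_label_def using N_pos by (rule suffix_sparse_blocks_gap)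

lemma le_block_pos_mult: "n \<le> block_pos n * N"
proof -
  have "block_pos n \<le> block_pos n * N"
    using N_pos by simp
  then show ?thesis
    using le_block_pos[of n] by linarith
qed

lemma orbit_dist_coding_block:
  assumes "1 \<le> j" "prod_decode n = (x, y)" "even y" "x \<in> A \<longleftrightarrow> x \<notin> B"
  shows "c \<le> orbit_dist j (scrambled_label j A) (scrambled_label j B) (block_pos n * N)"
  unfolding orbit_dist_def
proof (rule partner_separated_sym)
  let ?k = "block_pos n * N"
  show "1 \<le> j + ?k" "(\<lambda>_. 1) \<in> seqs m"
    using assms(1) const_one_in_seqs[OF one_le_m] by simp_all
  show "suffix ?k (scrambled_label j A) \<in> seqs m" "suffix ?k (scrambled_label j B) \<in> seqs m"
    using assms(1) by (simp_all add: scrambled_label_in_seqs suffix_in_seqs)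
  show "(\<forall>i<N. suffix ?k (scrambled_label j A) i = 1 \<and>
          suffix ?k (scrambled_label j B) i = partner (j + ?k) (\<lambda>_. 1) i) \<or>
        (\<forall>i<N. suffix ?k (scrambled_label j B) i = 1 \<and>
          suffix ?k (scrambled_label j A) i = partner (j + ?k) (\<lambda>_. 1) i)"
    using assms(4) scrambled_label_block[of _ n j A] scrambled_label_block[of _ n j B]
    by (simp add: scrambled_block_even[OF assms(2,3)])
qed

lemma orbit_dist_periodic_block:
  assumes "1 \<le> j" "prod_decode n = (x, y)" "odd y"
    and "from_nat_into (periodic_labels m) x = t" "t \<in> seqs m" "periodic_label p t" "p \<le> n"
  shows "c \<le> orbit_dist j (scrambled_label j A) t (block_pos n * N)"
proof -
  let ?k = "block_pos n * N"
  have "p dvd ?k"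
    using assms(6,7) dvd_block_pos[of p n] by (simp add: periodic_label_def)
  then have shift: "suffix ?k t = t"
    by (rule suffix_periodic_label[OF assms(6)])
  show ?thesis
    unfolding orbit_dist_def shift
  proof (rule partner_separated_sym[OF _ assms(5) _ assms(5)])
    show "1 \<le> j + ?k"
      using assms(1) by simp
    show "suffix ?k (scrambled_label j A) \<in> seqs m"
      using assms(1) by (simp add: scrambled_label_in_seqs suffix_in_seqs)
    show "(\<forall>i<N. suffix ?k (scrambled_label j A) i = t i \<and> t i = partner (j + ?k) t i) \<or>
          (\<forall>i<N. t i = t i \<and> suffix ?k (scrambled_label j A) i = partner (j + ?k) t i)"
      using assms(4) scrambled_label_block[of _ n j A] by (simp add: scrambled_block_odd[OF assms(2,3)])
  qed
qed

lemma scrambled_labels_separated: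
  assumes "1 \<le> j" "A \<noteq> B"
  shows "\<exists>\<^sub>F k in sequentially. c \<le> orbit_dist j (scrambled_label j A) (scrambled_label j B) k"
proof -
  obtain x where x: "x \<in> A \<longleftrightarrow> x \<notin> B"
    using assms(2) by blast
  have "\<exists>\<^sub>F n in sequentially. \<exists>y. prod_decode n = (x, y) \<and> even y"
    using frequently_even_sequentially by (rule frequently_prod_decode)
  then have "\<exists>\<^sub>F n in sequentially.
      c \<le> orbit_dist j (scrambled_label j A) (scrambled_label j B) (block_pos n * N)"
    by (rule frequently_elim1) (use orbit_dist_coding_block[OF assms(1) _ _ x] in blast)
  then show ?thesis
    using le_block_pos_mult by (rule frequently_sequentially_image[rotated])
qed

lemma scrambled_labels_close:
  assumes "1 \<le> j" "0 < \<epsilon>"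
  shows "\<exists>\<^sub>F k in sequentially. orbit_dist j (scrambled_label j A) (scrambled_label j B) k \<le> \<epsilon>"
proof -
  obtain M where M: "\<forall>l\<ge>1. \<forall>s\<in>seqs m. \<forall>t\<in>seqs m. (\<forall>i<M. s i = t i) \<longrightarrow> D l s t \<le> \<epsilon>"
    using small_cylinders[OF assms(2)] by blast
  have "\<forall>\<^sub>F n in sequentially.
      orbit_dist j (scrambled_label j A) (scrambled_label j B) (Suc (block_pos n) * N) \<le> \<epsilon>"
    unfolding eventually_sequentially
  proof (intro exI allI impI)
    fix n assume "M \<le> n"
    let ?k = "Suc (block_pos n) * N"
    have "\<forall>i<M. suffix ?k (scrambled_label j A) i = suffix ?k (scrambled_label j B) i"
      using \<open>M \<le> n\<close> scrambled_label_gap[of _ n] by simp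
    moreover have "suffix ?k (scrambled_label j A) \<in> seqs m" "suffix ?k (scrambled_label j B) \<in> seqs m"
      using assms(1) by (simp_all only: scrambled_label_in_seqs suffix_in_seqs)
    ultimately show "orbit_dist j (scrambled_label j A) (scrambled_label j B) ?k \<le> \<epsilon>"
      unfolding orbit_dist_def using M assms(1) by simp
  qed
  then have "\<exists>\<^sub>F n in sequentially.
      orbit_dist j (scrambled_label j A) (scrambled_label j B) (Suc (block_pos n) * N) \<le> \<epsilon>"
    by (simp add: eventually_frequently)
  moreover have "n \<le> Suc (block_pos n) * N" for n
    using le_block_pos_mult[of n] by simp
  ultimately show ?thesis
    by (rule frequently_sequentially_image[rotated])
qed

lemma scrambled_label_separated_periodic:
  assumes "1 \<le> j" "t \<in> periodic_labels m"
  shows "\<exists>\<^sub>F k in sequentially. c \<le> orbit_dist j (scrambled_label j A) t k"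
proof -
  obtain p where t: "t \<in> seqs m" and p: "periodic_label p t"
    using assms(2) unfolding periodic_labels_def by blast
  obtain x where x: "from_nat_into (periodic_labels m) x = t"
    using from_nat_into_surj[OF countable_periodic_labels assms(2)] by blast
  have "\<exists>\<^sub>F n in sequentially. \<exists>y. prod_decode n = (x, y) \<and> odd y"
    using frequently_odd_sequentially by (rule frequently_prod_decode)
  then have "\<exists>\<^sub>F n in sequentially. (\<exists>y. prod_decode n = (x, y) \<and> odd y) \<and> p \<le> n"
    by (rule frequently_eventually_frequently) simp
  then have "\<exists>\<^sub>F n in sequentially. c \<le> orbit_dist j (scrambled_label j A) t (block_pos n * N)"
    by (rule frequently_elim1) (use orbit_dist_periodic_block[OF assms(1) _ _ x t p] in blast)
  then show ?thesis
    using le_block_pos_mult by (rule frequently_sequentially_image[rotated])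
qed

lemma inj_scrambled_label:
  assumes "1 \<le> j"
  shows "inj (scrambled_label j)"
proof (rule injI)
  fix A B assume eq: "scrambled_label j A = scrambled_label j B"
  show "A = B"
  proof (rule ccontr)
    assume "A \<noteq> B"
    then obtain k where "c \<le> orbit_dist j (scrambled_label j A) (scrambled_label j B) k"
      using scrambled_labels_separated[OF assms] frequently_ex by blast
    then show False
      using eq c_pos orbit_dist_self[OF assms scrambled_label_in_seqs[OF assms]] by simp
  qed
qed

lemma scrambled_label_not_periodic:
  assumes "1 \<le> j"
  shows "\<not> periodic_label p (scrambled_label j A)"
proof
  assume "periodic_label p (scrambled_label j A)"
  then have "scrambled_label j A \<in> periodic_labels m"
    using scrambled_label_in_seqs[OF assms] by (auto simp: periodic_labels_def)
  then obtain k where "c \<le> orbit_dist j (scrambled_label j A) (scrambled_label j A) k"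
    using scrambled_label_separated_periodic[OF assms] frequently_ex by blast
  then show False
    using c_pos orbit_dist_self[OF assms scrambled_label_in_seqs[OF assms]] by simp
qed

theorem scrambled_set:
  assumes "1 \<le> j"
  shows "\<exists>S \<subseteq> seqs m. \<not> countable S \<and> (\<forall>s\<in>S. \<forall>p. \<not> periodic_label p s) \<and>
    (\<forall>s\<in>S. \<forall>t\<in>S. D j s t \<noteq> 0 \<longrightarrow>
      0 < limsup (\<lambda>k. ereal (orbit_dist j s t k)) \<and> liminf (\<lambda>k. ereal (orbit_dist j s t k)) = 0) \<and>
    (\<forall>s\<in>S. \<forall>t\<in>seqs m. (\<exists>p. periodic_label p t) \<longrightarrow> 0 < limsup (\<lambda>k. ereal (orbit_dist j s t k)))"
proof (intro exI conjI ballI allI impI)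
  let ?S = "range (scrambled_label j)"
  show "?S \<subseteq> seqs m"
    using scrambled_label_in_seqs[OF assms] by blast
  show "\<not> countable ?S"
    using uncountable_UNIV_nat_set countable_image_inj_on[OF _ inj_scrambled_label[OF assms]] by blast
  show "\<not> periodic_label p s" if "s \<in> ?S" for s p
    using that scrambled_label_not_periodic[OF assms] by blast
  fix s t assume "s \<in> ?S"
  then obtain A where s: "s = scrambled_label j A"
    by blast
  show "0 < limsup (\<lambda>k. ereal (orbit_dist j s t k))"
    if "t \<in> seqs m" "\<exists>p. periodic_label p t"
    using that c_pos scrambled_label_separated_periodic[OF assms]
    by (intro frequently_ge_imp_Limsup_pos) (auto simp: s periodic_labels_def)
  assume "t \<in> ?S" "D j s t \<noteq> 0"
  then obtain B where t: "t = scrambled_label j B" and "A \<noteq> B"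
    using dist_self[OF assms scrambled_label_in_seqs[OF assms]] s by blast
  show "0 < limsup (\<lambda>k. ereal (orbit_dist j s t k))"
    using c_pos scrambled_labels_separated[OF assms \<open>A \<noteq> B\<close>]
    unfolding s t by (rule frequently_ge_imp_Limsup_pos)
  show "liminf (\<lambda>k. ereal (orbit_dist j s t k)) = 0"
    unfolding s t
  proof (rule frequently_le_imp_Liminf_eq_0)
    show "\<forall>\<^sub>F k in sequentially. 0 \<le> orbit_dist j (scrambled_label j A) (scrambled_label j B) k"
      using assms by (simp add: orbit_dist_nonneg scrambled_label_in_seqs)
  qed (use assms scrambled_labels_close in auto)
qed

end

lemma strong_modular_chaotic_structure_separated_points:
  assumes "strong_modular_chaotic_structure m d lab"
  shows "\<exists>c>0. \<forall>l\<ge>1. \<forall>u\<in>seqs m. \<exists>v\<in>seqs m. c \<le> delta lab d (l, u) (l, v)"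
proof -
  obtain eps0 nn where eps0: "\<forall>j\<ge>1. 0 < eps0 j" "0 < (INF j\<in>{1..}. eps0 j)"
    and sep: "\<forall>j\<ge>1. \<forall>u\<in>seqs m. \<exists>v\<in>seqs m. \<forall>s\<in>seqs m. \<forall>t\<in>seqs m.
      (\<forall>k<nn j. s k = u k) \<longrightarrow> (\<forall>k<nn j. t k = v k) \<longrightarrow> eps0 j \<le> delta lab d (j, s) (j, t)"
    using assms unfolding strong_modular_chaotic_structure_def by (elim exE conjE)
  show "\<exists>c>0. \<forall>l\<ge>1. \<forall>u\<in>seqs m. \<exists>v\<in>seqs m. c \<le> delta lab d (l, u) (l, v)"
  proof (intro exI conjI allI impI ballI)
    show "0 < (INF j\<in>{1..}. eps0 j)"
      by (rule eps0(2))
    fix l :: nat and u assume l: "1 \<le> l" and u: "u \<in> seqs m"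
    obtain v where v: "v \<in> seqs m" and "\<forall>s\<in>seqs m. \<forall>t\<in>seqs m.
        (\<forall>k<nn l. s k = u k) \<longrightarrow> (\<forall>k<nn l. t k = v k) \<longrightarrow> eps0 l \<le> delta lab d (l, s) (l, t)"
      using sep l u by blast
    then have "eps0 l \<le> delta lab d (l, u) (l, v)"
      using u by blast
    moreover have "(INF j\<in>{1..}. eps0 j) \<le> eps0 l"
      using eps0(1) l by (intro cINF_lower bdd_belowI2[of _ 0]) (auto intro: less_imp_le)
    ultimately show "\<exists>v\<in>seqs m. (INF j\<in>{1..}. eps0 j) \<le> delta lab d (l, u) (l, v)"
      using v by (intro bexI[of _ v]) simp_all
  qed
qed

lemma strong_modular_chaotic_structure_label_pseudometrics:
  assumes "m \<ge> 2"
    and "\<And>j. j \<ge> 1 \<Longrightarrow> metric_on (F j) (d j)"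
    and "\<And>j. j \<ge> 1 \<Longrightarrow> presentation m (F j) (lab j)"
    and "strong_modular_chaotic_structure m d lab"
  shows "label_pseudometrics m (\<lambda>l s t. delta lab d (l, s) (l, t))"
proof
  have lab: "lab l s \<in> F l" if "1 \<le> l" "s \<in> seqs m" for l s
    using assms(3)[OF that(1)] that(2) by (auto simp: presentation_def)
  show "1 \<le> m"
    using assms(1) by simp
  show "delta lab d (l, s) (l, s) = 0" if "1 \<le> l" "s \<in> seqs m" for l s
    using assms(2)[OF that(1)] lab[OF that] by (simp add: metric_on_def delta_def)
  show "delta lab d (l, s) (l, t) = delta lab d (l, t) (l, s)"
    if "1 \<le> l" "s \<in> seqs m" "t \<in> seqs m" for l s t
    using assms(2)[OF that(1)] lab[OF that(1,2)] lab[OF that(1,3)] by (simp add: metric_on_def delta_def)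
  show "delta lab d (l, s) (l, u) \<le> delta lab d (l, s) (l, t) + delta lab d (l, t) (l, u)"
    if "1 \<le> l" "s \<in> seqs m" "t \<in> seqs m" "u \<in> seqs m" for l s t u
    using assms(2)[OF that(1)] lab[OF that(1,2)] lab[OF that(1,3)] lab[OF that(1,4)]
    by (simp add: metric_on_def delta_def)
  show "\<exists>c>0. \<forall>l\<ge>1. \<forall>u\<in>seqs m. \<exists>v\<in>seqs m. c \<le> delta lab d (l, u) (l, v)"
    using assms(4) by (rule strong_modular_chaotic_structure_separated_points)
  show "\<exists>N. \<forall>l\<ge>1. \<forall>s\<in>seqs m. \<forall>t\<in>seqs m. (\<forall>i<N. s i = t i) \<longrightarrow> delta lab d (l, s) (l, t) \<le> \<epsilon>"
    if "0 < \<epsilon>" for \<epsilon>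
    using conjunct1[OF assms(4)[unfolded strong_modular_chaotic_structure_def], rule_format, OF that]
    by blast
qed

theorem theorem3:
  fixes m :: nat
    and F :: "nat \<Rightarrow> 'a set"
    and d :: "nat \<Rightarrow> 'a \<Rightarrow> 'a \<Rightarrow> real"
    and lab :: "nat \<Rightarrow> (nat \<Rightarrow> nat) \<Rightarrow> 'a"
  assumes "m \<ge> 2"
    and "\<And>j. j \<ge> 1 \<Longrightarrow> metric_on (F j) (d j)"
    and "\<And>j. j \<ge> 1 \<Longrightarrow> presentation m (F j) (lab j)"
    and "strong_modular_chaotic_structure m d lab"
  shows "modular_li_yorke_chaotic m d lab"
proof -
  define D where "D l s t = delta lab d (l, s) (l, t)" for l s t
  interpret label_pseudometrics m D
    unfolding D_def[abs_def] using assms by (rule strong_modular_chaotic_structure_label_pseudometrics)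
  obtain c N partner where "cylinder_partner m D c N partner"
    using cylinder_partner_exists by blast
  then interpret cylinder_partner m D c N partner .
  have orbit: "delta lab d ((modsim ^^ k) (j, s)) ((modsim ^^ k) (j, t)) = orbit_dist j s t k"
    for j k s t
    by (simp add: modsim_power orbit_dist_def D_def)
  have "(\<lambda>_. 1) \<in> seqs m"
    using one_le_m by (rule const_one_in_seqs)
  then have periodic: "\<forall>j::nat\<ge>1. \<forall>p::nat\<ge>1. \<exists>s\<in>seqs m. periodic_label p s"
    using periodic_label_const by blast
  show ?thesis
    unfolding modular_li_yorke_chaotic_def orbit D_def[symmetric]
    by (intro conjI periodic allI impI scrambled_set)
qed

end
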